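(* A permutation $\sigma$ of $\mathcal M$ preserves the relation $z=\pm x\pm y$ if and only if $\sigma\in GL^\pm(\mathcal M)$.
   Context: $\mathcal M$ denotes the $\mathbb Q$-vector space $\mathbb Q^{<\omega}$ of all sequences of rationals with only finitely many nonzero terms, with zero vector $\vec 0$. The relation $z=\pm x\pm y$ is $\{(x,y,z): z\in\{x+y,x-y,-x+y,-x-y\}\}$; $\sigma$ preserves it if $(a,b,c)$ belongs to it iff $(\sigma a,\sigma b,\sigma c)$ does. $GL(\mathcal M)$ is the group of invertible $\mathbb Q$-linear maps of $\mathcal M$; $S^\pm(\mathcal M)$ is the group of permutations $\sigma$ of $\mathcal M$ with $\sigma(x)\in\{x,-x\}$ for every $x\in\mathcal M$; $GL^\pm(\mathcal M)$ is the group generated by $GL(\mathcal M)\cup S^\pm(\mathcal M)$. *)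

theory Defs
  imports Complex_Main "HOL-Library.Function_Algebras" "HOL-Algebra.Bij" "HOL-Algebra.Generated_Groups"
begin

text \<open>The Q-vector space M = Q^{<omega}: rational sequences with finite support,
  modelled as a carrier set inside the type nat => rat (pointwise operations).\<close>
definition M :: "(nat \<Rightarrow> rat) set" where
  "M = {x. finite {i. x i \<noteq> 0}}"

definition pmrel :: "(nat \<Rightarrow> rat) \<Rightarrow> (nat \<Rightarrow> rat) \<Rightarrow> (nat \<Rightarrow> rat) \<Rightarrow> bool" where
  "pmrel x y z \<longleftrightarrow> z \<in> {x + y, x - y, - x + y, - x - y}"

definition preserves_pm :: "((nat \<Rightarrow> rat) \<Rightarrow> (nat \<Rightarrow> rat)) \<Rightarrow> bool" where
  "preserves_pm \<sigma> \<longleftrightarrow>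
     (\<forall>a\<in>M. \<forall>b\<in>M. \<forall>c\<in>M. pmrel a b c \<longleftrightarrow> pmrel (\<sigma> a) (\<sigma> b) (\<sigma> c))"

text \<open>Permutations of M are the elements of the symmetric group BijGroup M
  (bijections of M, extensional outside M).\<close>

definition GL_M :: "((nat \<Rightarrow> rat) \<Rightarrow> (nat \<Rightarrow> rat)) set" where
  "GL_M = {\<sigma> \<in> Bij M. \<forall>x\<in>M. \<forall>y\<in>M. \<forall>p q :: rat.
              \<sigma> (\<lambda>i. p * x i + q * y i) = (\<lambda>i. p * \<sigma> x i + q * \<sigma> y i)}"

definition Spm_M :: "((nat \<Rightarrow> rat) \<Rightarrow> (nat \<Rightarrow> rat)) set" where
  "Spm_M = {\<sigma> \<in> Bij M. \<forall>x\<in>M. \<sigma> x = x \<or> \<sigma> x = - x}"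

definition GLpm_M :: "((nat \<Rightarrow> rat) \<Rightarrow> (nat \<Rightarrow> rat)) set" where
  "GLpm_M = generate (BijGroup M) (GL_M \<union> Spm_M)"

end

theory Submission
  imports Defs
begin

text \<open>
  A bijection \<open>g\<close> of \<open>M\<close> preserving \<open>z = \<plusminus>x \<plusminus> y\<close> fixes \<open>0\<close>, commutes with negation and
  satisfies \<open>g (x + y) = \<plusminus>g x \<plusminus> g y\<close>. Induction and injectivity give \<open>g (q x) = \<plusminus>q g x\<close> for
  rational \<open>q\<close>, so \<open>g\<close> preserves linear independence of two and of three vectors.
  For independent \<open>x, y\<close> a single relative sign \<open>s(x,y)\<close> serves all coefficients:
  \<open>g (p x + r y) = \<plusminus>(p g x + s(x,y) r g y)\<close>; comparing coefficients in the three
  expansions of \<open>g (x + y + z)\<close> shows \<open>s(x,z) = s(x,y) s(y,z)\<close> for independent \<open>x, y, z\<close>.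
  Hence, for a fixed \<open>x\<^sub>0 \<noteq> 0\<close>, the map \<open>T v = s(x\<^sub>0,v) g v\<close> (and \<open>T (q x\<^sub>0) = q g x\<^sub>0\<close>) is
  \<open>\<rat>\<close>-linear. Since \<open>T v = \<plusminus>g v\<close> everywhere, \<open>g = T \<circ> \<epsilon>\<close> with \<open>\<epsilon> \<in> S\<^sup>\<plusminus>(M)\<close>.
  Conversely, linear maps and sign changes preserve the relation, hence so does every
  element of the group they generate.
\<close>

definition smult :: "rat \<Rightarrow> (nat \<Rightarrow> rat) \<Rightarrow> nat \<Rightarrow> rat" where
  "smult q x = (\<lambda>i. q * x i)"

definition is_sign :: "rat \<Rightarrow> bool" where
  "is_sign e \<longleftrightarrow> e = 1 \<or> e = -1"

lemma smult_apply: "smult q x i = q * x i"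
  by (simp add: smult_def)

lemma smult_one [simp]: "smult 1 x = x"
  by (simp add: fun_eq_iff smult_apply)

lemma smult_zero [simp]: "smult 0 x = 0" "smult q 0 = 0"
  by (simp_all add: fun_eq_iff smult_apply)

lemma smult_smult [simp]: "smult a (smult b x) = smult (a * b) x"
  by (simp add: fun_eq_iff smult_apply)

lemma smult_minus_one: "smult (-1) x = - x"
  by (simp add: fun_eq_iff smult_apply)

lemma smult_eq_0_iff: "smult a x = 0 \<longleftrightarrow> a = 0 \<or> x = 0"
  by (auto simp: fun_eq_iff smult_apply)

lemma smult_right_cancel:
  assumes "x \<noteq> 0"
  shows "smult a x = smult b x \<longleftrightarrow> a = b"
proof
  assume eq: "smult a x = smult b x"
  obtain i where "x i \<noteq> 0" using assms by (auto simp: fun_eq_iff)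
  moreover have "a * x i = b * x i" using eq by (metis smult_apply)
  ultimately show "a = b" by simp
qed simp

lemma zero_in_M [simp]: "0 \<in> M"
  by (simp add: M_def)

lemma add_in_M [simp]: "x \<in> M \<Longrightarrow> y \<in> M \<Longrightarrow> x + y \<in> M"
  unfolding M_def by (auto intro: finite_subset[of _ "{i. x i \<noteq> 0} \<union> {i. y i \<noteq> 0}"])

lemma smult_in_M [simp]: "x \<in> M \<Longrightarrow> smult q x \<in> M"
  unfolding M_def by (auto simp: smult_apply intro: finite_subset[of _ "{i. x i \<noteq> 0}"])

lemma uminus_in_M [simp]: "x \<in> M \<Longrightarrow> - x \<in> M"
  unfolding M_def by simp

lemma is_sign_one [simp]: "is_sign 1" "is_sign (-1)"
  by (simp_all add: is_sign_def)

lemma is_sign_mult [simp]: "is_sign a \<Longrightarrow> is_sign b \<Longrightarrow> is_sign (a * b)"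
  by (auto simp: is_sign_def)

lemma is_sign_square: "is_sign a \<Longrightarrow> a * a = 1"
  by (auto simp: is_sign_def)

lemma is_sign_cancel: "is_sign a \<Longrightarrow> a * (a * b) = b"
  by (auto simp: is_sign_def)

lemma is_sign_nonzero: "is_sign a \<Longrightarrow> a \<noteq> 0"
  by (auto simp: is_sign_def)

lemma is_signE: "is_sign e \<Longrightarrow> (e = 1 \<Longrightarrow> P) \<Longrightarrow> (e = -1 \<Longrightarrow> P) \<Longrightarrow> P"
  by (auto simp: is_sign_def)

lemma sign_combination_eq:
  fixes p p' :: rat
  assumes "is_sign a" "is_sign b" "is_sign c" "p \<noteq> 0" "p' \<noteq> 0" "p + p' \<noteq> 0"
    and "a * p + b * p' = c * (p + p')"
  shows "a = c \<and> b = c"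
  using assms unfolding is_sign_def by (elim disjE; simp add: algebra_simps)

lemma pmrel_iff_signs:
  "pmrel a b c \<longleftrightarrow> (\<exists>e1 e2. is_sign e1 \<and> is_sign e2 \<and> c = smult e1 a + smult e2 b)"
proof
  assume "pmrel a b c"
  then consider "c = a + b" | "c = a - b" | "c = - a + b" | "c = - a - b"
    by (auto simp: pmrel_def)
  then show "\<exists>e1 e2. is_sign e1 \<and> is_sign e2 \<and> c = smult e1 a + smult e2 b"
  proof cases
    case 1 then show ?thesis by (intro exI[of _ 1]) simp
  next
    case 2 then show ?thesis by (intro exI[of _ 1] exI[of _ "-1"]) (simp add: smult_minus_one)
  next
    case 3 then show ?thesis by (intro exI[of _ "-1"] exI[of _ 1]) (simp add: smult_minus_one)
  next
    case 4 then show ?thesis by (intro exI[of _ "-1"]) (simp add: smult_minus_one)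
  qed
next
  assume "\<exists>e1 e2. is_sign e1 \<and> is_sign e2 \<and> c = smult e1 a + smult e2 b"
  then obtain e1 e2 where "is_sign e1" "is_sign e2" "c = smult e1 a + smult e2 b" by blast
  then show "pmrel a b c" unfolding pmrel_def
    by (elim is_signE) (simp_all add: fun_eq_iff smult_apply)
qed

lemma pmrel_smult_signs_imp:
  assumes "is_sign ea" "is_sign eb" "is_sign ec" "pmrel a b c"
  shows "pmrel (smult ea a) (smult eb b) (smult ec c)"
proof -
  obtain e1 e2 where e: "is_sign e1" "is_sign e2" "c = smult e1 a + smult e2 b"
    using assms(4) pmrel_iff_signs by blast
  have k: "ec * e1 * ea * ea = ec * e1" "ec * e2 * eb * eb = ec * e2"
    using is_sign_square[OF assms(1)] is_sign_square[OF assms(2)] by (simp_all add: mult.assoc)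
  have "smult ec c = smult (ec * e1) a + smult (ec * e2) b"
    using e(3) by (simp add: fun_eq_iff smult_apply algebra_simps)
  then have "smult ec c = smult (ec * e1 * ea) (smult ea a) + smult (ec * e2 * eb) (smult eb b)"
    unfolding smult_smult mult.assoc[symmetric] k .
  then show ?thesis
    unfolding pmrel_iff_signs using assms e by (metis is_sign_mult)
qed

lemma pmrel_smult_signs:
  assumes "is_sign ea" "is_sign eb" "is_sign ec"
  shows "pmrel (smult ea a) (smult eb b) (smult ec c) \<longleftrightarrow> pmrel a b c"
proof
  assume "pmrel (smult ea a) (smult eb b) (smult ec c)"
  from pmrel_smult_signs_imp[OF assms this] show "pmrel a b c"
    using is_sign_square assms by simp
qed (rule pmrel_smult_signs_imp[OF assms])

section \<open>Linear independence of two and three vectors\<close>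

definition lin_indep2 :: "(nat \<Rightarrow> rat) \<Rightarrow> (nat \<Rightarrow> rat) \<Rightarrow> bool" where
  "lin_indep2 x y \<longleftrightarrow> (\<forall>p r. smult p x + smult r y = 0 \<longrightarrow> p = 0 \<and> r = 0)"

definition lin_indep3 :: "(nat \<Rightarrow> rat) \<Rightarrow> (nat \<Rightarrow> rat) \<Rightarrow> (nat \<Rightarrow> rat) \<Rightarrow> bool" where
  "lin_indep3 x y z \<longleftrightarrow>
     (\<forall>p r t. smult p x + smult r y + smult t z = 0 \<longrightarrow> p = 0 \<and> r = 0 \<and> t = 0)"

lemma lin_indep2_coeffs_eq:
  assumes "lin_indep2 x y" "smult a x + smult b y = smult c x + smult d y"
  shows "a = c \<and> b = d"
proof -
  have "smult (a - c) x + smult (b - d) y = 0"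
    using assms(2) by (auto simp: fun_eq_iff smult_apply algebra_simps)
  then show ?thesis using assms(1) unfolding lin_indep2_def by fastforce
qed

lemma lin_indep3_coeffs_eq:
  assumes "lin_indep3 x y z"
    and "smult a x + smult b y + smult c z = smult a' x + smult b' y + smult c' z"
  shows "a = a' \<and> b = b' \<and> c = c'"
proof -
  have "smult (a - a') x + smult (b - b') y + smult (c - c') z
      = (smult a x + smult b y + smult c z) - (smult a' x + smult b' y + smult c' z)"
    by (simp add: fun_eq_iff smult_apply algebra_simps)
  then have "smult (a - a') x + smult (b - b') y + smult (c - c') z = 0"
    using assms(2) by simp
  then show ?thesis using assms(1) unfolding lin_indep3_def by fastforce
qed

lemma lin_indep2_imp_nonzero: "lin_indep2 x y \<Longrightarrow> x \<noteq> 0"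
  unfolding lin_indep2_def by (metis add.right_neutral smult_zero zero_neq_one)

lemma not_lin_indep2_smult: "\<not> lin_indep2 x (smult q x)"
proof
  assume "lin_indep2 x (smult q x)"
  moreover have "smult q x + smult (-1) (smult q x) = 0"
    by (simp add: fun_eq_iff smult_apply)
  ultimately show False unfolding lin_indep2_def by fastforce
qed

lemma lin_indep2_combination:
  assumes "lin_indep2 x y" "r \<noteq> 0"
  shows "lin_indep2 x (smult p x + smult r y)"
  unfolding lin_indep2_def
proof (intro allI impI)
  fix a b assume "smult a x + smult b (smult p x + smult r y) = 0"
  moreover have
    "smult a x + smult b (smult p x + smult r y) = smult (a + b * p) x + smult (b * r) y"
    by (simp add: fun_eq_iff smult_apply algebra_simps)
  ultimately have "a + b * p = 0 \<and> b * r = 0"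
    using assms(1) unfolding lin_indep2_def by metis
  then show "a = 0 \<and> b = 0" using assms(2) by auto
qed

lemma lin_indep3_combinations:
  assumes "lin_indep3 x y z"
    and "\<And>p r. p * a + r * a' = 0 \<Longrightarrow> p * b + r * b' = 0 \<Longrightarrow> p * c + r * c' = 0 \<Longrightarrow> p = 0 \<and> r = 0"
  shows "lin_indep2 (smult a x + smult b y + smult c z) (smult a' x + smult b' y + smult c' z)"
  unfolding lin_indep2_def
proof (intro allI impI)
  fix p r
  assume "smult p (smult a x + smult b y + smult c z)
    + smult r (smult a' x + smult b' y + smult c' z) = 0"
  moreover have "smult (p * a + r * a') x + smult (p * b + r * b') y + smult (p * c + r * c') z
      = smult p (smult a x + smult b y + smult c z)
        + smult r (smult a' x + smult b' y + smult c' z)"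
    by (simp add: fun_eq_iff smult_apply algebra_simps)
  ultimately have "p * a + r * a' = 0 \<and> p * b + r * b' = 0 \<and> p * c + r * c' = 0"
    using assms(1) unfolding lin_indep3_def by metis
  then show "p = 0 \<and> r = 0" using assms(2) by blast
qed

lemma lin_indep3_imp_lin_indep2:
  assumes "lin_indep3 x y z"
  shows "lin_indep2 x y" "lin_indep2 y z" "lin_indep2 x z"
    and "lin_indep2 (x + y) z" "lin_indep2 x (y + z)" "lin_indep2 (x + z) y"
proof -
  have "lin_indep2 (smult 1 x + smult 0 y + smult 0 z) (smult 0 x + smult 1 y + smult 0 z)"
    by (rule lin_indep3_combinations[OF assms]) simp
  then show "lin_indep2 x y" by simp
  have "lin_indep2 (smult 0 x + smult 1 y + smult 0 z) (smult 0 x + smult 0 y + smult 1 z)"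
    by (rule lin_indep3_combinations[OF assms]) simp
  then show "lin_indep2 y z" by simp
  have "lin_indep2 (smult 1 x + smult 0 y + smult 0 z) (smult 0 x + smult 0 y + smult 1 z)"
    by (rule lin_indep3_combinations[OF assms]) simp
  then show "lin_indep2 x z" by simp
  have "lin_indep2 (smult 1 x + smult 1 y + smult 0 z) (smult 0 x + smult 0 y + smult 1 z)"
    by (rule lin_indep3_combinations[OF assms]) simp
  then show "lin_indep2 (x + y) z" by simp
  have "lin_indep2 (smult 1 x + smult 0 y + smult 0 z) (smult 0 x + smult 1 y + smult 1 z)"
    by (rule lin_indep3_combinations[OF assms]) simp
  then show "lin_indep2 x (y + z)" by (simp add: add.assoc)
  have "lin_indep2 (smult 1 x + smult 0 y + smult 1 z) (smult 0 x + smult 1 y + smult 0 z)"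
    by (rule lin_indep3_combinations[OF assms]) simp
  then show "lin_indep2 (x + z) y" by simp
qed

lemma not_lin_indep3_zero: "\<not> lin_indep3 x y 0"
proof
  assume "lin_indep3 x y 0"
  moreover have "smult 0 x + smult 0 y + smult 1 0 = 0" by simp
  ultimately show False unfolding lin_indep3_def by fastforce
qed

lemma lin_indep3_add:
  assumes "lin_indep3 x u v"
  shows "lin_indep3 x u (u + v)"
  unfolding lin_indep3_def
proof (intro allI impI)
  fix p r t assume "smult p x + smult r u + smult t (u + v) = 0"
  moreover have "smult p x + smult r u + smult t (u + v) = smult p x + smult (r + t) u + smult t v"
    by (simp add: fun_eq_iff smult_apply algebra_simps)
  ultimately have "p = 0 \<and> r + t = 0 \<and> t = 0"
    using assms unfolding lin_indep3_def by metis
  then show "p = 0 \<and> r = 0 \<and> t = 0" by simp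
qed

lemma not_lin_indep2_imp_multiple:
  assumes "\<not> lin_indep2 x u" "x \<noteq> 0"
  obtains q where "u = smult q x"
proof -
  obtain p r where h: "smult p x + smult r u = 0" "\<not> (p = 0 \<and> r = 0)"
    using assms(1) unfolding lin_indep2_def by blast
  have r: "r \<noteq> 0"
  proof
    assume "r = 0"
    then have "smult p x = 0" using h by simp
    then show False using h assms(2) \<open>r = 0\<close> by (simp add: smult_eq_0_iff)
  qed
  have "u = smult (- p / r) x"
  proof (rule ext)
    fix i
    have "p * x i + r * u i = 0" using h(1) by (metis plus_fun_apply smult_apply zero_fun_apply)
    then show "u i = smult (- p / r) x i" using r by (simp add: smult_apply field_simps)
  qed
  then show ?thesis by (rule that)
qed

lemma not_lin_indep3_imp_combination:
  assumes "\<not> lin_indep3 x u v" "lin_indep2 x u"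
  obtains p r where "v = smult p x + smult r u"
proof -
  obtain p r t where h: "smult p x + smult r u + smult t v = 0" "\<not> (p = 0 \<and> r = 0 \<and> t = 0)"
    using assms(1) unfolding lin_indep3_def by blast
  have t: "t \<noteq> 0"
  proof
    assume "t = 0"
    then have "smult p x + smult r u = 0" using h by simp
    then show False using h assms(2) \<open>t = 0\<close> unfolding lin_indep2_def by blast
  qed
  have "v = smult (- p / t) x + smult (- r / t) u"
  proof (rule ext)
    fix i
    have "p * x i + r * u i + t * v i = 0"
      using h(1) by (metis plus_fun_apply smult_apply zero_fun_apply)
    then have "t * v i = - (p * x i) - r * u i" by linarith
    then show "v i = (smult (- p / t) x + smult (- r / t) u) i"
      using t by (simp add: smult_apply field_simps)
  qed
  then show ?thesis by (rule that)
qed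

definition unit_vec :: "nat \<Rightarrow> nat \<Rightarrow> rat" where
  "unit_vec i = (\<lambda>j. if j = i then 1 else 0)"

lemma unit_vec_in_M [simp]: "unit_vec i \<in> M"
  unfolding M_def unit_vec_def by (simp add: finite_subset[of _ "{i}"])

lemma unit_vec_nonzero [simp]: "unit_vec i \<noteq> 0"
  unfolding unit_vec_def by (auto simp: fun_eq_iff)

lemma lin_indep2_unit_vec: "i \<noteq> j \<Longrightarrow> lin_indep2 (unit_vec i) (unit_vec j)"
  unfolding lin_indep2_def
proof (intro allI impI)
  fix p r assume "i \<noteq> j" "smult p (unit_vec i) + smult r (unit_vec j) = 0"
  then have "(smult p (unit_vec i) + smult r (unit_vec j)) i = 0"
    "(smult p (unit_vec i) + smult r (unit_vec j)) j = 0" by simp_all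
  then show "p = 0 \<and> r = 0" using \<open>i \<noteq> j\<close> by (simp add: smult_apply unit_vec_def)
qed

lemma plane_through_unit_vec:
  assumes "\<not> lin_indep3 (unit_vec 0) u v" "u \<in> M" "v \<in> M"
  obtains y p1 r1 p2 r2 where "y \<in> M" "lin_indep2 (unit_vec 0) y"
    "u = smult p1 (unit_vec 0) + smult r1 y" "v = smult p2 (unit_vec 0) + smult r2 y"
proof (cases "lin_indep2 (unit_vec 0) u")
  case True
  obtain p r where "v = smult p (unit_vec 0) + smult r u"
    using not_lin_indep3_imp_combination[OF assms(1) True] .
  moreover have "u = smult 0 (unit_vec 0) + smult 1 u" by simp
  ultimately show ?thesis using that True assms(2) by blast
next
  case False
  then obtain q where q: "u = smult q (unit_vec 0)"
    using not_lin_indep2_imp_multiple unit_vec_nonzero by blast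
  show ?thesis
  proof (cases "lin_indep2 (unit_vec 0) v")
    case True
    have "v = smult 0 (unit_vec 0) + smult 1 v" "u = smult q (unit_vec 0) + smult 0 v"
      using q by simp_all
    then show ?thesis using that True assms(3) by blast
  next
    case False
    then obtain q' where q': "v = smult q' (unit_vec 0)"
      using not_lin_indep2_imp_multiple unit_vec_nonzero by blast
    show ?thesis
      by (rule that[of "unit_vec 1" q 0 q' 0]) (simp_all add: q q' lin_indep2_unit_vec)
  qed
qed

section \<open>Bijections preserving the relation\<close>

locale pm_preserving =
  fixes g :: "(nat \<Rightarrow> rat) \<Rightarrow> nat \<Rightarrow> rat"
  assumes bij: "bij_betw g M M" and preserves: "preserves_pm g"
begin

lemma in_M [simp]: "x \<in> M \<Longrightarrow> g x \<in> M"
  using bij bij_betw_imp_funcset by blast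

lemma injD: "x \<in> M \<Longrightarrow> y \<in> M \<Longrightarrow> g x = g y \<Longrightarrow> x = y"
  using bij by (meson bij_betw_def inj_onD)

lemma pmrel_image_iff:
  "a \<in> M \<Longrightarrow> b \<in> M \<Longrightarrow> c \<in> M \<Longrightarrow> pmrel (g a) (g b) (g c) \<longleftrightarrow> pmrel a b c"
  using preserves unfolding preserves_pm_def by blast

lemma zero [simp]: "g 0 = 0"
proof -
  have "pmrel (g 0) (g 0) (g 0)"
    using pmrel_image_iff[of 0 0 0] by (simp add: pmrel_def)
  then have "\<forall>i. g 0 i = 0" unfolding pmrel_def by (auto simp: fun_eq_iff)
  then show ?thesis by (auto simp: fun_eq_iff)
qed

lemma eq_0_iff: "x \<in> M \<Longrightarrow> g x = 0 \<longleftrightarrow> x = 0"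
  using injD[of x 0] by fastforce

lemma uminus:
  assumes "x \<in> M"
  shows "g (- x) = - g x"
proof -
  have "pmrel x 0 (- x)" by (simp add: pmrel_def)
  then have "pmrel (g x) 0 (g (- x))" using pmrel_image_iff[of x 0 "- x"] assms by simp
  then have "g (- x) = g x \<or> g (- x) = - g x" unfolding pmrel_def by simp
  then show ?thesis
  proof
    assume "g (- x) = g x"
    then have "- x = x" by (rule injD[OF uminus_in_M[OF assms] assms])
    then have "x = 0" by (simp add: fun_eq_iff)
    then show ?thesis by simp
  qed
qed

lemma smult_sign: "x \<in> M \<Longrightarrow> is_sign e \<Longrightarrow> g (smult e x) = smult e (g x)"
  by (elim is_signE) (simp_all add: uminus smult_minus_one)

lemma eq_smult_sign_if_image_eq:
  assumes "u \<in> M" "v \<in> M" "is_sign e" "g u = smult e (g v)"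
  shows "u = smult e v"
  using assms(4) smult_sign[OF assms(2,3)] injD[OF assms(1) smult_in_M[OF assms(2)]] by simp

lemma add:
  assumes "a \<in> M" "b \<in> M"
  obtains e1 e2 where "is_sign e1" "is_sign e2" "g (a + b) = smult e1 (g a) + smult e2 (g b)"
proof -
  have "pmrel (g a) (g b) (g (a + b))"
    using pmrel_image_iff assms by (simp add: pmrel_def)
  then show ?thesis using that unfolding pmrel_iff_signs by blast
qed

lemma smult_nat:
  assumes x: "x \<in> M"
  shows "\<exists>e. is_sign e \<and> g (smult (of_nat n) x) = smult (e * of_nat n) (g x)"
proof (induction n rule: induct_nat_012)
  case 0 show ?case by (metis is_sign_one(1) of_nat_0 smult_zero mult_zero_right zero)
next
  case 1 show ?case by (intro exI[of _ 1]) simp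
next
  case (ge2 m)
  obtain e' where e': "is_sign e'" "g (smult (of_nat m) x) = smult (e' * of_nat m) (g x)"
    using ge2.IH(1) by blast
  obtain e where e: "is_sign e" "g (smult (of_nat (Suc m)) x) = smult (e * of_nat (Suc m)) (g x)"
    using ge2.IH(2) by blast
  have "smult (of_nat (Suc (Suc m))) x = smult (of_nat (Suc m)) x + x"
    by (simp add: fun_eq_iff smult_apply algebra_simps)
  then obtain e1 e2 where e12: "is_sign e1" "is_sign e2"
    "g (smult (of_nat (Suc (Suc m))) x) = smult e1 (g (smult (of_nat (Suc m)) x)) + smult e2 (g x)"
    using add[of "smult (of_nat (Suc m)) x" x] x by auto
  then have gn: "g (smult (of_nat (Suc (Suc m))) x) = smult (e1 * e * of_nat (Suc m) + e2) (g x)"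
    using e(2) by (simp add: fun_eq_iff smult_apply algebra_simps)
  consider "e2 = e1 * e" | "e2 = - (e1 * e)"
    using e e12 by (auto simp: is_sign_def)
  then show ?case
  proof cases
    case 1
    with gn e e12 show ?thesis by (intro exI[of _ e2]) (simp add: algebra_simps)
  next
    case 2
    text \<open>The wrong signs would identify \<open>(m + 2) x\<close> with \<open>\<plusminus>m x\<close>, forcing \<open>x = 0\<close>.\<close>
    have "e1 * e * of_nat (Suc m) + e2 = (e1 * e * e') * (e' * of_nat m)"
      using 2 is_sign_square[OF e'(1)] by (simp add: algebra_simps)
    then have "g (smult (of_nat (Suc (Suc m))) x) = smult (e1 * e * e') (g (smult (of_nat m) x))"
      using gn e'(2) by simp
    then have "smult (of_nat (Suc (Suc m))) x = smult (e1 * e * e') (smult (of_nat m) x)"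
      using eq_smult_sign_if_image_eq[OF smult_in_M[OF x] smult_in_M[OF x]] e e' e12 by simp
    then have "smult (of_nat (Suc (Suc m))) x = smult (e1 * e * e' * of_nat m) x"
      by simp
    moreover have "(of_nat (Suc (Suc m)) :: rat) \<noteq> e1 * e * e' * of_nat m"
      using is_sign_mult[OF is_sign_mult[OF e12(1) e(1)] e'(1)] by (auto simp: is_sign_def)
    ultimately have "x = 0" using smult_right_cancel by blast
    then show ?thesis by (metis is_sign_one(1) smult_zero(2) zero)
  qed
qed

lemma smult_int:
  assumes x: "x \<in> M"
  shows "\<exists>e. is_sign e \<and> g (smult (of_int k) x) = smult (e * of_int k) (g x)"
proof (cases "k \<ge> 0")
  case True
  then obtain n where "k = int n" using nonneg_int_cases by blast
  then show ?thesis using smult_nat[OF x, of n] by simp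
next
  case False
  then obtain n where k: "k = - int n"
    by (metis minus_minus neg_0_le_iff_le nle_le nonneg_int_cases)
  obtain e where e: "is_sign e" "g (smult (of_nat n) x) = smult (e * of_nat n) (g x)"
    using smult_nat[OF x, of n] by blast
  have "g (smult (of_int k) x) = g (smult (-1) (smult (of_nat n) x))" using k by simp
  also have "\<dots> = smult (-1) (g (smult (of_nat n) x))" using x by (intro smult_sign) auto
  also have "\<dots> = smult (e * of_int k) (g x)" using e k by simp
  finally show ?thesis using e by blast
qed

lemma smult:
  assumes x: "x \<in> M"
  shows "\<exists>e. is_sign e \<and> g (smult q x) = smult (e * q) (g x)"
proof -
  obtain a b where q: "q = of_int a / of_int b" and b: "b > 0"
    by (metis Fract_of_int_quotient quotient_of_unique prod.collapse
        quotient_of_denom_pos quotient_of_div)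
  define y where "y = smult (1 / of_int b) x"
  have y: "y \<in> M" using x y_def by simp
  have xy: "x = smult (of_int b) y" using b y_def by simp
  obtain e1 where e1: "is_sign e1" "g x = smult (e1 * of_int b) (g y)"
    using smult_int[OF y, of b] xy by auto
  have gy: "g y = smult (e1 / of_int b) (g x)"
    using e1 b is_sign_square[OF e1(1)] by (simp add: field_simps)
  obtain e2 where e2: "is_sign e2" "g (smult (of_int a) y) = smult (e2 * of_int a) (g y)"
    using smult_int[OF y, of a] by auto
  have "smult q x = smult (of_int a) y" using q y_def by (simp add: field_simps)
  then have "g (smult q x) = smult (e1 * e2 * q) (g x)" using e2 gy q by (simp add: field_simps)
  then show ?thesis using e1 e2 by (intro exI[of _ "e1 * e2"]) simp
qed

lemma lin_indep2_image:
  assumes x: "x \<in> M" and y: "y \<in> M" and ind: "lin_indep2 x y"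
  shows "lin_indep2 (g x) (g y)"
  unfolding lin_indep2_def
proof (intro allI impI)
  fix p r assume h: "smult p (g x) + smult r (g y) = 0"
  show "p = 0 \<and> r = 0"
  proof (cases "r = 0")
    case True
    then have "smult p (g x) = 0" using h by simp
    moreover have "g x \<noteq> 0" using eq_0_iff x lin_indep2_imp_nonzero[OF ind] by blast
    ultimately show ?thesis using True by (simp add: smult_eq_0_iff)
  next
    case False
    obtain e where e: "is_sign e" "g (smult (- p / r) x) = smult (e * (- p / r)) (g x)"
      using smult[OF x] by blast
    have "g y = smult (- p / r) (g x)"
    proof (rule ext)
      fix i
      have "p * g x i + r * g y i = 0" using h by (metis plus_fun_apply smult_apply zero_fun_apply)
      then show "g y i = smult (- p / r) (g x) i" using False by (simp add: smult_apply field_simps)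
    qed
    also have "\<dots> = smult e (g (smult (- p / r) x))"
      unfolding e(2) by (simp add: is_sign_cancel[OF e(1)])
    finally have "y = smult e (smult (- p / r) x)"
      by (rule eq_smult_sign_if_image_eq[OF y smult_in_M[OF x] e(1)])
    then have "y = smult (e * (- p / r)) x" by simp
    then show ?thesis using ind not_lin_indep2_smult by metis
  qed
qed

end

section \<open>Relative signs\<close>

context pm_preserving
begin

definition rel_sign_at :: "(nat \<Rightarrow> rat) \<Rightarrow> (nat \<Rightarrow> rat) \<Rightarrow> rat \<Rightarrow> rat \<Rightarrow> rat \<Rightarrow> bool" where
  "rel_sign_at x y p r s \<longleftrightarrow>
     (\<exists>e. is_sign e \<and> g (smult p x + smult r y) = smult (e * p) (g x) + smult (e * s * r) (g y))"

lemma ex_rel_sign_at: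
  assumes x: "x \<in> M" and y: "y \<in> M"
  shows "\<exists>s. is_sign s \<and> rel_sign_at x y p r s"
proof -
  obtain e1 e2 where e12: "is_sign e1" "is_sign e2"
    "g (smult p x + smult r y) = smult e1 (g (smult p x)) + smult e2 (g (smult r y))"
    using add[of "smult p x" "smult r y"] x y by auto
  obtain a where a: "is_sign a" "g (smult p x) = smult (a * p) (g x)" using smult[OF x] by blast
  obtain b where b: "is_sign b" "g (smult r y) = smult (b * r) (g y)" using smult[OF y] by blast
  have "(e1 * a) * (e1 * a * e2 * b) = (e1 * e1) * (a * a) * (e2 * b)" by (simp add: ac_simps)
  then have k: "(e1 * a) * (e1 * a * e2 * b) * r = e2 * b * r" using is_sign_square e12 a by simp
  have "g (smult p x + smult r y)
      = smult ((e1 * a) * p) (g x) + smult ((e1 * a) * (e1 * a * e2 * b) * r) (g y)"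
    unfolding k using e12(3) a b by (simp add: ac_simps)
  then show ?thesis unfolding rel_sign_at_def using e12 a b
    by (intro exI[of _ "e1 * a * e2 * b"] conjI exI[of _ "e1 * a"]) auto
qed

lemma rel_sign_at_unique:
  assumes x: "x \<in> M" and y: "y \<in> M" and ind: "lin_indep2 x y"
    and nz: "p \<noteq> 0" "r \<noteq> 0" "p' \<noteq> 0" "r' \<noteq> 0" "p + p' \<noteq> 0" "r + r' \<noteq> 0"
    and s: "is_sign s" "rel_sign_at x y p r s" and s': "is_sign s'" "rel_sign_at x y p' r' s'"
  shows "s = s'"
proof -
  obtain e where e: "is_sign e"
    "g (smult p x + smult r y) = smult (e * p) (g x) + smult (e * s * r) (g y)"
    using s rel_sign_at_def by blast
  obtain e' where e': "is_sign e'"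
    "g (smult p' x + smult r' y) = smult (e' * p') (g x) + smult (e' * s' * r') (g y)"
    using s' rel_sign_at_def by blast
  obtain s'' where "is_sign s''" "rel_sign_at x y (p + p') (r + r') s''"
    using ex_rel_sign_at x y by blast
  then obtain e'' where e'': "is_sign s''" "is_sign e''"
    "g (smult (p + p') x + smult (r + r') y)
       = smult (e'' * (p + p')) (g x) + smult (e'' * s'' * (r + r')) (g y)"
    unfolding rel_sign_at_def by blast
  have "smult (p + p') x + smult (r + r') y = (smult p x + smult r y) + (smult p' x + smult r' y)"
    by (simp add: fun_eq_iff smult_apply algebra_simps)
  then obtain e1 e2 where e12: "is_sign e1" "is_sign e2"
    "g (smult (p + p') x + smult (r + r') y)
       = smult e1 (g (smult p x + smult r y)) + smult e2 (g (smult p' x + smult r' y))"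
    using add[of "smult p x + smult r y" "smult p' x + smult r' y"] x y by auto
  have "smult (e'' * (p + p')) (g x) + smult (e'' * s'' * (r + r')) (g y)
     = smult ((e1 * e) * p + (e2 * e') * p') (g x)
       + smult ((e1 * e) * s * r + (e2 * e') * s' * r') (g y)"
    using e12(3) e e' e'' by (simp add: fun_eq_iff smult_apply algebra_simps)
  then have c: "e'' * (p + p') = (e1 * e) * p + (e2 * e') * p'"
    "e'' * s'' * (r + r') = (e1 * e) * s * r + (e2 * e') * s' * r'"
    using lin_indep2_coeffs_eq[OF lin_indep2_image[OF x y ind]] by blast+
  have "e1 * e = e''" "e2 * e' = e''"
    using sign_combination_eq[of "e1 * e" "e2 * e'" e'' p p'] c(1) e e' e'' e12 nz by auto
  then have "e'' * (s * r + s' * r') = e'' * (s'' * (r + r'))"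
    using c(2) by (simp add: algebra_simps)
  then have "s * r + s' * r' = s'' * (r + r')" using is_sign_nonzero[OF e''(2)] by simp
  then show ?thesis using sign_combination_eq[of s s' s'' r r'] s s' e'' nz by auto
qed

lemma ex_uniform_rel_sign:
  assumes x: "x \<in> M" and y: "y \<in> M" and ind: "lin_indep2 x y"
  shows "\<exists>s. is_sign s \<and> (\<forall>p r. rel_sign_at x y p r s)"
proof -
  obtain s0 where s0: "is_sign s0" "rel_sign_at x y 1 1 s0" using ex_rel_sign_at x y by blast
  have "rel_sign_at x y p r s0" for p r
  proof (cases "p = 0 \<or> r = 0")
    case True
    then consider "p = 0" | "r = 0" by blast
    then show ?thesis
    proof cases
      case 1
      obtain b where b: "is_sign b" "g (smult r y) = smult (b * r) (g y)" using smult[OF y] by blast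
      have k: "b * s0 * s0 * r = b * r" using is_sign_square[OF s0(1)] by (simp add: mult.assoc)
      show ?thesis unfolding rel_sign_at_def
        using 1 b s0 by (intro exI[of _ "b * s0"]) (simp add: k)
    next
      case 2
      obtain a where a: "is_sign a" "g (smult p x) = smult (a * p) (g x)" using smult[OF x] by blast
      then show ?thesis unfolding rel_sign_at_def using 2 by (intro exI[of _ a]) simp
    qed
  next
    case False
    obtain s where s: "is_sign s" "rel_sign_at x y p r s" using ex_rel_sign_at x y by blast
    text \<open>Pass through coefficients \<open>p', r' \<in> {1, 2}\<close> chosen so that no sum of
      coefficients vanishes.\<close>
    define p' where "p' = (if p = -1 then 2 else (1::rat))"
    define r' where "r' = (if r = -1 then 2 else (1::rat))"
    obtain s' where s': "is_sign s'" "rel_sign_at x y p' r' s'" using ex_rel_sign_at x y by blast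
    have "s = s'"
      using False
        by (intro rel_sign_at_unique[OF x y ind _ _ _ _ _ _ s s']) (auto simp: p'_def r'_def)
    moreover have "s' = s0"
      by (rule rel_sign_at_unique[OF x y ind _ _ _ _ _ _ s' s0]) (auto simp: p'_def r'_def)
    ultimately show ?thesis using s by simp
  qed
  then show ?thesis using s0 by blast
qed

definition rel_sign :: "(nat \<Rightarrow> rat) \<Rightarrow> (nat \<Rightarrow> rat) \<Rightarrow> rat" where
  "rel_sign x y = (SOME s. is_sign s \<and> (\<forall>p r. rel_sign_at x y p r s))"

lemma
  assumes "x \<in> M" "y \<in> M" "lin_indep2 x y"
  shows is_sign_rel_sign: "is_sign (rel_sign x y)"
    and rel_sign_at_rel_sign: "rel_sign_at x y p r (rel_sign x y)"
  using someI_ex[OF ex_uniform_rel_sign[OF assms]] unfolding rel_sign_def[symmetric] by auto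

lemma add_rel_sign:
  assumes "x \<in> M" "y \<in> M" "lin_indep2 x y"
  obtains e where "is_sign e" "g (x + y) = smult e (g x) + smult (e * rel_sign x y) (g y)"
  using rel_sign_at_rel_sign[OF assms, of 1 1] unfolding rel_sign_at_def by auto

lemma lin_indep3_image:
  assumes x: "x \<in> M" and y: "y \<in> M" and z: "z \<in> M" and ind: "lin_indep3 x y z"
  shows "lin_indep3 (g x) (g y) (g z)"
  unfolding lin_indep3_def
proof (intro allI impI)
  fix p r t assume h: "smult p (g x) + smult r (g y) + smult t (g z) = 0"
  have i2: "lin_indep2 x y" using lin_indep3_imp_lin_indep2[OF ind] by simp
  show "p = 0 \<and> r = 0 \<and> t = 0"
  proof (cases "t = 0")
    case True
    then show ?thesis using h lin_indep2_image[OF x y i2] unfolding lin_indep2_def by simp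
  next
    case False
    define a where "a = - p / t"
    define b where "b = - r / t"
    have gz: "g z = smult a (g x) + smult b (g y)"
    proof (rule ext)
      fix i
      have "p * g x i + r * g y i + t * g z i = 0"
        using h by (metis plus_fun_apply smult_apply zero_fun_apply)
      then have "t * g z i = - (p * g x i) - r * g y i" by linarith
      then show "g z i = (smult a (g x) + smult b (g y)) i"
        using False by (simp add: smult_apply a_def b_def field_simps)
    qed
    define s where "s = rel_sign x y"
    have s: "is_sign s" using is_sign_rel_sign[OF x y i2] s_def by simp
    obtain e where e: "is_sign e"
      "g (smult a x + smult (s * b) y) = smult (e * a) (g x) + smult (e * s * (s * b)) (g y)"
      using rel_sign_at_rel_sign[OF x y i2, of a "s * b"] unfolding rel_sign_at_def s_def by blast
    have k: "e * s * (s * b) = e * b"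
      using is_sign_square[OF s] by (simp add: mult.assoc[symmetric])
    have "g (smult a x + smult (s * b) y) = smult (e * a) (g x) + smult (e * b) (g y)"
      using e(2) unfolding k .
    then have "g (smult a x + smult (s * b) y) = smult e (g z)"
      unfolding gz by (simp add: fun_eq_iff smult_apply algebra_simps)
    then have "smult a x + smult (s * b) y = smult e z"
      using eq_smult_sign_if_image_eq[OF _ z e(1)] x y by simp
    then have "smult a x + smult (s * b) y + smult (- e) z = 0"
      by (simp add: fun_eq_iff smult_apply)
    then show ?thesis using ind is_sign_nonzero[OF e(1)] unfolding lin_indep3_def by fastforce
  qed
qed

text \<open>Expand \<open>g (x + y + z)\<close> along \<open>(x + y) + z\<close>, \<open>x + (y + z)\<close> and \<open>(x + z) + y\<close> and compare
  coefficients in the independent triple \<open>g x, g y, g z\<close>.\<close>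

lemma rel_sign_cocycle:
  assumes x: "x \<in> M" and y: "y \<in> M" and z: "z \<in> M" and ind: "lin_indep3 x y z"
  shows "rel_sign x z = rel_sign x y * rel_sign y z"
proof -
  note i = lin_indep3_imp_lin_indep2[OF ind]
  note I = lin_indep3_image[OF x y z ind]
  obtain a where a: "is_sign a" "g (x + y) = smult a (g x) + smult (a * rel_sign x y) (g y)"
    using add_rel_sign[OF x y i(1)] by blast
  obtain b where b: "is_sign b" "g (y + z) = smult b (g y) + smult (b * rel_sign y z) (g z)"
    using add_rel_sign[OF y z i(2)] by blast
  obtain c where c: "is_sign c" "g (x + z) = smult c (g x) + smult (c * rel_sign x z) (g z)"
    using add_rel_sign[OF x z i(3)] by blast
  obtain e1 where e1: "is_sign e1"
    "g ((x + y) + z) = smult e1 (g (x + y)) + smult (e1 * rel_sign (x + y) z) (g z)"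
    using add_rel_sign[OF _ z i(4)] x y by auto
  obtain e2 where e2: "is_sign e2"
    "g (x + (y + z)) = smult e2 (g x) + smult (e2 * rel_sign x (y + z)) (g (y + z))"
    using add_rel_sign[OF x _ i(5)] y z by auto
  obtain e3 where e3: "is_sign e3"
    "g ((x + z) + y) = smult e3 (g (x + z)) + smult (e3 * rel_sign (x + z) y) (g y)"
    using add_rel_sign[OF _ y i(6)] x z by auto
  have w: "(x + y) + z = x + (y + z)" "(x + z) + y = x + (y + z)" by (simp_all add: ac_simps)
  define s where "s = rel_sign x (y + z)"
  have f1: "g (x + (y + z)) = smult (e1 * a) (g x) + smult (e1 * a * rel_sign x y) (g y)
      + smult (e1 * rel_sign (x + y) z) (g z)"
    using e1(2) a(2) w by (simp add: fun_eq_iff smult_apply algebra_simps)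
  have f2: "g (x + (y + z)) = smult e2 (g x) + smult (e2 * s * b) (g y)
      + smult (e2 * s * b * rel_sign y z) (g z)"
    using e2(2) b(2) s_def by (simp add: fun_eq_iff smult_apply algebra_simps)
  have f3: "g (x + (y + z)) = smult (e3 * c) (g x) + smult (e3 * rel_sign (x + z) y) (g y)
      + smult (e3 * c * rel_sign x z) (g z)"
    using e3(2) c(2) w by (simp add: fun_eq_iff smult_apply algebra_simps)
  have A: "e1 * a = e2" "e1 * a * rel_sign x y = e2 * s * b"
    using lin_indep3_coeffs_eq[OF I] f1 f2 by (metis (no_types, lifting))+
  have B: "e2 = e3 * c" "e2 * s * b * rel_sign y z = e3 * c * rel_sign x z"
    using lin_indep3_coeffs_eq[OF I] f2 f3 by (metis (no_types, lifting))+
  have e2: "e2 \<noteq> 0" using is_sign_nonzero e2 by simp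
  have "rel_sign x y = s * b" using A e2 by (simp add: mult.assoc)
  moreover have "rel_sign x z = s * b * rel_sign y z" using B e2 by (simp add: mult.assoc)
  ultimately show ?thesis by simp
qed

lemma rel_sign_combination:
  assumes x: "x \<in> M" and y: "y \<in> M" and ind: "lin_indep2 x y" and r: "r \<noteq> 0"
    and e: "is_sign e"
    and h: "g (smult p x + smult r y) = smult (e * p) (g x) + smult (e * rel_sign x y * r) (g y)"
  shows "rel_sign x (smult p x + smult r y) = e"
proof -
  define v where "v = smult p x + smult r y"
  define s where "s = rel_sign x y"
  define s' where "s' = rel_sign x v"
  have s: "is_sign s" using is_sign_rel_sign[OF x y ind] s_def by simp
  have v: "v \<in> M" using x y v_def by simp
  have indv: "lin_indep2 x v" unfolding v_def using lin_indep2_combination[OF ind r] .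
  obtain e' where e': "is_sign e'" "g (x + v) = smult e' (g x) + smult (e' * s') (g v)"
    using add_rel_sign[OF x v indv] unfolding s'_def by blast
  obtain f where f: "is_sign f"
    "g (smult (1 + p) x + smult r y) = smult (f * (1 + p)) (g x) + smult (f * s * r) (g y)"
    using rel_sign_at_rel_sign[OF x y ind, of "1 + p" r] unfolding rel_sign_at_def s_def by blast
  have "x + v = smult (1 + p) x + smult r y"
    by (simp add: v_def fun_eq_iff smult_apply algebra_simps)
  then have "smult (f * (1 + p)) (g x) + smult (f * s * r) (g y)
      = smult e' (g x) + smult (e' * s') (g v)"
    using e'(2) f(2) by simp
  then have "smult (f * (1 + p)) (g x) + smult (f * s * r) (g y)
      = smult (e' + e' * s' * e * p) (g x) + smult (e' * s' * e * s * r) (g y)"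
    unfolding v_def h s_def by (simp add: fun_eq_iff smult_apply algebra_simps)
  then have c: "f * (1 + p) = e' + e' * s' * e * p" "f * s * r = e' * s' * e * s * r"
    using lin_indep2_coeffs_eq[OF lin_indep2_image[OF x y ind]] by blast+
  have "f * (s * r) = (e' * s' * e) * (s * r)" using c(2) by (simp add: ac_simps)
  then have "f = e' * s' * e" using is_sign_nonzero[OF s] r by simp
  with c(1) have "e' * (s' * e) = e' * 1" by (simp add: algebra_simps)
  then have "s' * e = 1" using is_sign_nonzero[OF e'(1)] by simp
  then have "s' * e * e = e" by simp
  then show ?thesis using is_sign_square[OF e] s'_def v_def by (simp add: mult.assoc)
qed

end

section \<open>The linear part of a preserving bijection\<close>

context pm_preserving
begin

text \<open>On the line through \<open>unit_vec 0\<close> the relative sign is undefined, so there the map is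
  fixed by linearity alone.\<close>

definition linearized :: "(nat \<Rightarrow> rat) \<Rightarrow> nat \<Rightarrow> rat" where
  "linearized v =
     (if lin_indep2 (unit_vec 0) v then smult (rel_sign (unit_vec 0) v) (g v)
      else smult (THE q. v = smult q (unit_vec 0)) (g (unit_vec 0)))"

lemma linearized_smult_unit_vec: "linearized (smult q (unit_vec 0)) = smult q (g (unit_vec 0))"
proof -
  have "(THE q'. smult q (unit_vec 0) = smult q' (unit_vec 0)) = q"
    by (rule the_equality) (simp_all add: smult_right_cancel)
  then show ?thesis unfolding linearized_def using not_lin_indep2_smult by simp
qed

lemma linearized_plane:
  assumes y: "y \<in> M" and ind: "lin_indep2 (unit_vec 0) y"
  shows "linearized (smult p (unit_vec 0) + smult r y)
    = smult p (g (unit_vec 0)) + smult (r * rel_sign (unit_vec 0) y) (g y)"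
proof (cases "r = 0")
  case True
  then show ?thesis using linearized_smult_unit_vec by simp
next
  case False
  define v where "v = smult p (unit_vec 0) + smult r y"
  have indv: "lin_indep2 (unit_vec 0) v"
    unfolding v_def using lin_indep2_combination[OF ind False] .
  obtain e where e: "is_sign e"
    "g v = smult (e * p) (g (unit_vec 0)) + smult (e * rel_sign (unit_vec 0) y * r) (g y)"
    using rel_sign_at_rel_sign[OF unit_vec_in_M y ind, of p r] unfolding rel_sign_at_def v_def
      by blast
  then have "rel_sign (unit_vec 0) v = e"
    unfolding v_def by (intro rel_sign_combination[OF unit_vec_in_M y ind False])
  then have "linearized v = smult e (g v)" unfolding linearized_def using indv by simp
  also have "\<dots> = smult p (g (unit_vec 0)) + smult (r * rel_sign (unit_vec 0) y) (g y)"
    unfolding e(2) by (simp add: fun_eq_iff smult_apply algebra_simps is_sign_cancel[OF e(1)])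
  finally show ?thesis unfolding v_def .
qed

lemma linearized_add:
  assumes u: "u \<in> M" and v: "v \<in> M"
  shows "linearized (u + v) = linearized u + linearized v"
proof (cases "lin_indep3 (unit_vec 0) u v")
  case False
  obtain y p1 r1 p2 r2 where y: "y \<in> M" "lin_indep2 (unit_vec 0) y"
    "u = smult p1 (unit_vec 0) + smult r1 y" "v = smult p2 (unit_vec 0) + smult r2 y"
    using plane_through_unit_vec[OF False u v] by blast
  have "u + v = smult (p1 + p2) (unit_vec 0) + smult (r1 + r2) y"
    using y by (simp add: fun_eq_iff smult_apply algebra_simps)
  then have "linearized (u + v)
      = smult (p1 + p2) (g (unit_vec 0)) + smult ((r1 + r2) * rel_sign (unit_vec 0) y) (g y)"
    using linearized_plane[OF y(1,2)] by simp
  also have "\<dots> = linearized u + linearized v"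
    unfolding y(3,4) linearized_plane[OF y(1,2)] by (simp add: fun_eq_iff smult_apply algebra_simps)
  finally show ?thesis .
next
  case ind: True
  note i = lin_indep3_imp_lin_indep2[OF ind]
  obtain a where a: "is_sign a" "g (u + v) = smult a (g u) + smult (a * rel_sign u v) (g v)"
    using add_rel_sign[OF u v i(2)] by blast
  have "rel_sign u (smult 1 u + smult 1 v) = a"
    by (rule rel_sign_combination[OF u v i(2) one_neq_zero a(1)]) (simp add: a(2))
  then have "rel_sign (unit_vec 0) (u + v) = rel_sign (unit_vec 0) u * a"
    using rel_sign_cocycle[OF unit_vec_in_M u _ lin_indep3_add[OF ind]] u v by simp
  then have "linearized (u + v) = smult (rel_sign (unit_vec 0) u * a) (g (u + v))"
    unfolding linearized_def using i(5) by simp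
  also have "\<dots> = smult (rel_sign (unit_vec 0) u) (g u)
      + smult (rel_sign (unit_vec 0) u * rel_sign u v) (g v)"
    using a by (simp add: fun_eq_iff smult_apply algebra_simps is_sign_cancel[OF a(1)])
  also have "\<dots> = linearized u + linearized v"
    unfolding linearized_def rel_sign_cocycle[OF unit_vec_in_M u v ind] using i(1,3) by simp
  finally show ?thesis .
qed

lemma linearized_smult:
  assumes u: "u \<in> M"
  shows "linearized (smult q u) = smult q (linearized u)"
proof -
  obtain y p r where y: "y \<in> M" "lin_indep2 (unit_vec 0) y" "u = smult p (unit_vec 0) + smult r y"
    using plane_through_unit_vec[OF not_lin_indep3_zero u zero_in_M] by blast
  have "smult q u = smult (q * p) (unit_vec 0) + smult (q * r) y"
    using y by (simp add: fun_eq_iff smult_apply algebra_simps)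
  then have "linearized (smult q u)
      = smult (q * p) (g (unit_vec 0)) + smult ((q * r) * rel_sign (unit_vec 0) y) (g y)"
    using linearized_plane[OF y(1,2)] by simp
  also have "\<dots> = smult q (linearized u)"
    unfolding y(3) linearized_plane[OF y(1,2)] by (simp add: fun_eq_iff smult_apply algebra_simps)
  finally show ?thesis .
qed

lemma linearized_eq_smult_sign:
  assumes u: "u \<in> M"
  obtains e where "is_sign e" "linearized u = smult e (g u)"
proof (cases "lin_indep2 (unit_vec 0) u")
  case True
  show ?thesis
    by (rule that[OF is_sign_rel_sign[OF unit_vec_in_M u True]]) (simp add: linearized_def True)
next
  case False
  then obtain q where q: "u = smult q (unit_vec 0)"
    using not_lin_indep2_imp_multiple unit_vec_nonzero by blast
  obtain e where e: "is_sign e" "g (smult q (unit_vec 0)) = smult (e * q) (g (unit_vec 0))"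
    using smult[OF unit_vec_in_M] by blast
  have "linearized u = smult (e * (e * q)) (g (unit_vec 0))"
    unfolding q linearized_smult_unit_vec is_sign_cancel[OF e(1)] ..
  also have "\<dots> = smult e (g u)" using q e by simp
  finally show ?thesis using that e by blast
qed

lemma linearized_in_M:
  assumes "u \<in> M"
  shows "linearized u \<in> M"
proof -
  obtain e where "linearized u = smult e (g u)" using linearized_eq_smult_sign[OF assms] .
  then show ?thesis using assms by simp
qed

lemma bij_linearized: "bij_betw linearized M M"
proof (rule bij_betw_imageI)
  show "inj_on linearized M"
  proof (rule inj_onI)
    fix u v assume uv: "u \<in> M" "v \<in> M" "linearized u = linearized v"
    have w: "u + smult (-1) v \<in> M" using uv by simp
    have "linearized (u + smult (-1) v) = linearized u + smult (-1) (linearized v)"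
      using uv by (simp add: linearized_add linearized_smult)
    then have "linearized (u + smult (-1) v) = 0" using uv(3) by (simp add: fun_eq_iff smult_apply)
    moreover obtain e where "is_sign e"
      "linearized (u + smult (-1) v) = smult e (g (u + smult (-1) v))"
      using linearized_eq_smult_sign[OF w] by blast
    ultimately have "g (u + smult (-1) v) = 0" using is_sign_nonzero by (simp add: smult_eq_0_iff)
    then have "u + smult (-1) v = 0" using eq_0_iff w by simp
    then show "u = v" by (simp add: fun_eq_iff smult_apply)
  qed
  show "linearized ` M = M"
  proof
    show "linearized ` M \<subseteq> M" using linearized_in_M by blast
    show "M \<subseteq> linearized ` M"
    proof
      fix z assume "z \<in> M"
      then have "z \<in> g ` M" using bij by (simp add: bij_betw_def)
      then obtain w where w: "w \<in> M" "g w = z" by blast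
      obtain e where e: "is_sign e" "linearized w = smult e z"
        using linearized_eq_smult_sign[OF w(1)] unfolding w(2) .
      then have "linearized (smult e w) = z"
        using linearized_smult[OF w(1)] is_sign_square[OF e(1)] by simp
      then show "z \<in> linearized ` M" by (rule image_eqI[OF sym smult_in_M[OF w(1)]])
    qed
  qed
qed

lemma restrict_linearized_in_GL_M: "restrict linearized M \<in> GL_M"
proof -
  have "restrict linearized M \<in> Bij M"
    unfolding Bij_def using bij_linearized by simp
  moreover have "restrict linearized M (\<lambda>i. p * x i + q * y i)
      = (\<lambda>i. p * restrict linearized M x i + q * restrict linearized M y i)"
    if "x \<in> M" "y \<in> M" for x y p q
  proof -
    have "(\<lambda>i. p * x i + q * y i) = smult p x + smult q y" by (simp add: fun_eq_iff smult_apply)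
    then have "restrict linearized M (\<lambda>i. p * x i + q * y i)
        = smult p (linearized x) + smult q (linearized y)"
      using that by (simp add: linearized_add linearized_smult)
    also have "\<dots> = (\<lambda>i. p * restrict linearized M x i + q * restrict linearized M y i)"
      using that by (simp add: fun_eq_iff smult_apply)
    finally show ?thesis .
  qed
  ultimately show ?thesis unfolding GL_M_def by blast
qed

definition sign_change :: "(nat \<Rightarrow> rat) \<Rightarrow> nat \<Rightarrow> rat" where
  "sign_change = restrict (\<lambda>x. if g x = linearized x then x else - x) M"

lemma sign_change_in_M: "x \<in> M \<Longrightarrow> sign_change x \<in> M"
  unfolding sign_change_def by simp

lemma linearized_sign_change:
  assumes x: "x \<in> M"
  shows "linearized (sign_change x) = g x"
proof (cases "g x = linearized x")
  case True
  then show ?thesis unfolding sign_change_def using x by simp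
next
  case False
  obtain e where e: "is_sign e" "linearized x = smult e (g x)"
    using linearized_eq_smult_sign[OF x] by blast
  then have "e = -1" using False by (auto simp: is_sign_def)
  then have "linearized (smult (-1) x) = g x"
    using linearized_smult[OF x] e by (simp add: fun_eq_iff smult_apply)
  then show ?thesis unfolding sign_change_def using x False by (simp add: smult_minus_one)
qed

lemma sign_change_in_Spm_M: "sign_change \<in> Spm_M"
proof -
  have "sign_change x = inv_into M linearized (g x)" if "x \<in> M" for x
    using linearized_sign_change[OF that] sign_change_in_M[OF that] bij_linearized
    by (metis bij_betw_inv_into_left)
  then have "bij_betw sign_change M M \<longleftrightarrow> bij_betw (inv_into M linearized \<circ> g) M M"
    by (intro bij_betw_cong) simp
  then have "bij_betw sign_change M M"
    using bij_betw_trans[OF bij bij_betw_inv_into[OF bij_linearized]] by simp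
  moreover have "sign_change \<in> extensional M" unfolding sign_change_def by simp
  moreover have "\<forall>x\<in>M. sign_change x = x \<or> sign_change x = - x" unfolding sign_change_def by simp
  ultimately show ?thesis unfolding Spm_M_def Bij_def by blast
qed

lemma restrict_in_GLpm_M: "restrict g M \<in> GLpm_M"
proof -
  have "restrict g M = compose M (restrict linearized M) sign_change"
    unfolding compose_def using linearized_sign_change sign_change_in_M by (intro ext) simp
  also have "\<dots> = restrict linearized M \<otimes>\<^bsub>BijGroup M\<^esub> sign_change"
    using restrict_linearized_in_GL_M sign_change_in_Spm_M
    unfolding GL_M_def Spm_M_def BijGroup_def by simp
  finally have "restrict g M = restrict linearized M \<otimes>\<^bsub>BijGroup M\<^esub> sign_change" .
  then show ?thesis unfolding GLpm_M_def
    by (simp only:) (rule generate.eng; rule generate.incl;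
        use restrict_linearized_in_GL_M sign_change_in_Spm_M in blast)
qed

end

section \<open>Elements of \<open>GL\<^sup>\<plusminus>(M)\<close> preserve the relation\<close>

lemma GL_M_preserves_pm:
  assumes h: "h \<in> GL_M"
  shows "preserves_pm h"
proof -
  have bh: "bij_betw h M M" using h unfolding GL_M_def Bij_def by blast
  have lin: "h (smult p x + smult q y) = smult p (h x) + smult q (h y)"
    if "x \<in> M" "y \<in> M" for x y p q
  proof -
    have "h (\<lambda>i. p * x i + q * y i) = (\<lambda>i. p * h x i + q * h y i)"
      using h that unfolding GL_M_def by blast
    then show ?thesis by (simp add: smult_def plus_fun_def)
  qed
  show ?thesis unfolding preserves_pm_def
  proof (intro ballI)
    fix a b c assume abc: "a \<in> M" "b \<in> M" "c \<in> M"
    show "pmrel a b c \<longleftrightarrow> pmrel (h a) (h b) (h c)"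
    proof
      assume "pmrel a b c"
      then obtain e1 e2 where e: "is_sign e1" "is_sign e2" "c = smult e1 a + smult e2 b"
        using pmrel_iff_signs by blast
      then have "h c = smult e1 (h a) + smult e2 (h b)" using lin abc by simp
      then show "pmrel (h a) (h b) (h c)" using e pmrel_iff_signs by blast
    next
      assume "pmrel (h a) (h b) (h c)"
      then obtain e1 e2 where e: "is_sign e1" "is_sign e2" "h c = smult e1 (h a) + smult e2 (h b)"
        using pmrel_iff_signs by blast
      then have "h c = h (smult e1 a + smult e2 b)" using lin abc by simp
      then have "c = smult e1 a + smult e2 b"
        using bh abc unfolding bij_betw_def inj_on_def by (meson add_in_M smult_in_M)
      then show "pmrel a b c" using e pmrel_iff_signs by blast
    qed
  qed
qed

lemma Spm_M_preserves_pm: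
  assumes h: "h \<in> Spm_M"
  shows "preserves_pm h"
  unfolding preserves_pm_def
proof (intro ballI)
  fix a b c assume abc: "a \<in> M" "b \<in> M" "c \<in> M"
  have "\<exists>e. is_sign e \<and> h x = smult e x" if "x \<in> M" for x
  proof -
    have "h x = x \<or> h x = - x" using h that unfolding Spm_M_def by blast
    then show ?thesis by (metis is_sign_one smult_one smult_minus_one)
  qed
  then obtain ea eb ec where "is_sign ea" "h a = smult ea a" "is_sign eb" "h b = smult eb b"
    "is_sign ec" "h c = smult ec c"
    using abc by meson
  then show "pmrel a b c \<longleftrightarrow> pmrel (h a) (h b) (h c)" using pmrel_smult_signs by simp
qed

lemma preserves_pm_compose:
  assumes "h2 \<in> Bij M" "preserves_pm h1" "preserves_pm h2"
  shows "preserves_pm (compose M h1 h2)"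
  unfolding preserves_pm_def
proof (intro ballI)
  fix a b c assume abc: "a \<in> M" "b \<in> M" "c \<in> M"
  have h2: "h2 x \<in> M" if "x \<in> M" for x using assms(1) that Bij_imp_funcset by blast
  have "pmrel a b c \<longleftrightarrow> pmrel (h2 a) (h2 b) (h2 c)"
    using assms(3) abc unfolding preserves_pm_def by blast
  also have "\<dots> \<longleftrightarrow> pmrel (h1 (h2 a)) (h1 (h2 b)) (h1 (h2 c))"
    using assms(2) abc h2 unfolding preserves_pm_def by blast
  finally show "pmrel a b c \<longleftrightarrow> pmrel (compose M h1 h2 a) (compose M h1 h2 b) (compose M h1 h2 c)"
    using abc by (simp add: compose_def)
qed

lemma preserves_pm_inv:
  assumes hB: "h \<in> Bij M" and h: "preserves_pm h"
  shows "preserves_pm (restrict (inv_into M h) M)"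
  unfolding preserves_pm_def
proof (intro ballI)
  fix a b c assume abc: "a \<in> M" "b \<in> M" "c \<in> M"
  have bh: "bij_betw h M M" using hB unfolding Bij_def by blast
  have i: "inv_into M h x \<in> M" "h (inv_into M h x) = x" if "x \<in> M" for x
    using bh that by (auto simp: bij_betw_def inv_into_into f_inv_into_f)
  have "pmrel (inv_into M h a) (inv_into M h b) (inv_into M h c) \<longleftrightarrow>
        pmrel (h (inv_into M h a)) (h (inv_into M h b)) (h (inv_into M h c))"
    using h i abc unfolding preserves_pm_def by blast
  then show "pmrel a b c \<longleftrightarrow>
      pmrel (restrict (inv_into M h) M a) (restrict (inv_into M h) M b)
        (restrict (inv_into M h) M c)"
    using i abc by simp
qed

lemma GLpm_M_preserves_pm:
  assumes "h \<in> GLpm_M"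
  shows "preserves_pm h"
proof -
  have "h \<in> Bij M \<and> preserves_pm h"
    using assms unfolding GLpm_M_def
  proof (induction rule: generate.induct)
    case one
    have "\<one>\<^bsub>BijGroup M\<^esub> = (\<lambda>x\<in>M. x)" by (simp add: BijGroup_def)
    moreover have "preserves_pm (\<lambda>x\<in>M. x)" unfolding preserves_pm_def by simp
    ultimately show ?case using id_Bij by metis
  next
    case (incl h)
    then show ?case using GL_M_preserves_pm Spm_M_preserves_pm unfolding GL_M_def Spm_M_def by blast
  next
    case (inv h)
    then have "h \<in> Bij M" "preserves_pm h"
      using GL_M_preserves_pm Spm_M_preserves_pm unfolding GL_M_def Spm_M_def by blast+
    then show ?case
      unfolding inv_BijGroup[OF \<open>h \<in> Bij M\<close>] using restrict_inv_into_Bij preserves_pm_inv by blast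
  next
    case (eng h1 h2)
    then show ?case
      using compose_Bij[of h1 M h2] preserves_pm_compose[of h2 h1] by (simp add: BijGroup_def)
  qed
  then show ?thesis ..
qed

theorem mainTheorem13:
  fixes \<sigma> :: "(nat \<Rightarrow> rat) \<Rightarrow> (nat \<Rightarrow> rat)"
  assumes "bij_betw \<sigma> M M"
  shows "preserves_pm \<sigma> \<longleftrightarrow> restrict \<sigma> M \<in> GLpm_M"
proof
  assume "preserves_pm \<sigma>"
  then interpret pm_preserving \<sigma> using assms by unfold_locales
  show "restrict \<sigma> M \<in> GLpm_M" by (rule restrict_in_GLpm_M)
next
  assume "restrict \<sigma> M \<in> GLpm_M"
  then have "preserves_pm (restrict \<sigma> M)" by (rule GLpm_M_preserves_pm)
  then show "preserves_pm \<sigma>" unfolding preserves_pm_def by simp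
qed

end
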